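(* Let $\mathcal{B}=(T,\bowtie)$ be a homogeneous block, let $(T_1,\dots,T_k)$ be a legal partition of $T$ (a partition into $k$ conflict-free sets), and let $\sigma$ be a permutation of $\{1,\dots,k\}$. Let $\mathcal S=\mathrm{LevelSchedule}(T_1,\dots,T_k)$ and $\mathcal S_\sigma=\mathrm{LevelSchedule}(T_{\sigma(1)},\dots,T_{\sigma(k)})$. Then $\mathrm{Lt}_{\mathbb 1}(\mathcal S)\le k$ and $\mathrm{Lt}_{\mathbb 1}(\mathcal S_\sigma)\le k$.
   Context: A block consists of a finite set $T$ of transactions with a symmetric irreflexive conflict relation $\bowtie$; homogeneous means all transactions have the same length, taken to be $1$. A set is conflict-free if no two elements conflict; a legal partition is an ordered sequence of pairwise disjoint conflict-free sets with union $T$. A schedule is $\mathcal S\subseteq T\times T$ with $(T,\mathcal S)$ acyclic; $\mathrm{Lt}_{\mathbb 1}(\mathcal S)$ is the maximum number of vertices on a directed path in $(T,\mathcal S)$. $\mathrm{LevelSchedule}(B_1,\dots,B_k)$: set $B_0=\emptyset$, $\mathcal S=\emptyset$; for $i=1,\dots,k$ and, for each $i$, for $j=i-1,\dots,0$ (decreasing): let $E=\{(u,v)\in B_j\times B_i: u\bowtie v\}$, let $P$ be the set of pairs $(x,y)$ with a directed path from $x$ to $y$ in the current $(T,\mathcal S)$, and set $\mathcal S\leftarrow\mathcal S\cup(E\setminus P)$; output $\mathcal S$. *)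

theory Defs
  imports "HOL-Combinatorics.Permutations"
begin

text \<open>Homogeneity (all lengths equal to 1) is
  reflected in measuring latency by the number of vertices on a path.\<close>
definition block :: "'a set \<Rightarrow> ('a \<Rightarrow> 'a \<Rightarrow> bool) \<Rightarrow> bool" where
  "block T C \<longleftrightarrow> finite T \<and> (\<forall>x\<in>T. \<forall>y\<in>T. C x y \<longrightarrow> C y x) \<and> (\<forall>x\<in>T. \<not> C x x)"

definition conflict_free :: "('a \<Rightarrow> 'a \<Rightarrow> bool) \<Rightarrow> 'a set \<Rightarrow> bool" where
  "conflict_free C A \<longleftrightarrow> (\<forall>x\<in>A. \<forall>y\<in>A. \<not> C x y)"

definition legal_partition :: "'a set \<Rightarrow> ('a \<Rightarrow> 'a \<Rightarrow> bool) \<Rightarrow> nat \<Rightarrow> (nat \<Rightarrow> 'a set) \<Rightarrow> bool" where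
  "legal_partition T C k B \<longleftrightarrow>
     (\<forall>i\<in>{1..k}. conflict_free C (B i)) \<and>
     (\<forall>i\<in>{1..k}. \<forall>j\<in>{1..k}. i \<noteq> j \<longrightarrow> B i \<inter> B j = {}) \<and>
     (\<Union>i\<in>{1..k}. B i) = T"

text \<open>Outer loop i = 1..k, inner
  loop j = i-1 down to 0; P is the set of pairs joined by a (nonempty) directed
  path in the current schedule, i.e. its transitive closure.\<close>
definition level_schedule :: "('a \<Rightarrow> 'a \<Rightarrow> bool) \<Rightarrow> nat \<Rightarrow> (nat \<Rightarrow> 'a set) \<Rightarrow> ('a \<times> 'a) set" where
  "level_schedule C k B =
     (let B0 = (\<lambda>j. if j = 0 then {} else B j) in
      fold (\<lambda>i S. fold (\<lambda>j S. S \<union> ({(u, v). u \<in> B0 j \<and> v \<in> B0 i \<and> C u v} - S\<^sup>+))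
                         (rev [0..<i]) S)
           [1..<Suc k] {})"

definition is_path :: "'a set \<Rightarrow> ('a \<times> 'a) set \<Rightarrow> 'a list \<Rightarrow> bool" where
  "is_path T S xs \<longleftrightarrow> xs \<noteq> [] \<and> distinct xs \<and> set xs \<subseteq> T \<and>
     (\<forall>i. Suc i < length xs \<longrightarrow> (xs ! i, xs ! Suc i) \<in> S)"

definition Lt1 :: "'a set \<Rightarrow> ('a \<times> 'a) set \<Rightarrow> nat" where
  "Lt1 T S = Sup {length xs | xs. is_path T S xs}"

end

theory Submission
  imports Defs
begin

text \<open>Every edge that LevelSchedule adds leads from a class \<open>B j\<close> to a class \<open>B i\<close>
  with \<open>j < i\<close>. Since the classes are disjoint, the index of the class containing a
  vertex strictly increases along every directed path, so a path visits at most \<open>k\<close>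
  vertices. Reordering the classes by \<open>\<sigma>\<close> yields another legal partition, to which
  the same bound applies. Neither the conflict relation nor the block axioms matter.\<close>

lemma level_schedule_edge:
  assumes "(u, v) \<in> level_schedule C k B"
  shows "\<exists>j i. 1 \<le> j \<and> j < i \<and> i \<le> k \<and> u \<in> B j \<and> v \<in> B i"
proof -
  let ?R = "{(u, v). \<exists>j i. 1 \<le> j \<and> j < i \<and> i \<le> k \<and> u \<in> B j \<and> v \<in> B i}"
  have "level_schedule C k B \<subseteq> ?R"
    unfolding level_schedule_def Let_def
  proof (rule fold_invariant[where Q = "\<lambda>i. i \<in> {1..k}"])
    fix i :: nat and S assume i: "i \<in> {1..k}" and S: "S \<subseteq> ?R"
    show "fold (\<lambda>j S. S \<union> ({(u, v). u \<in> (if j = 0 then {} else B j)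
            \<and> v \<in> (if i = 0 then {} else B i) \<and> C u v} - S\<^sup>+)) (rev [0..<i]) S \<subseteq> ?R"
      by (rule fold_invariant[where Q = "\<lambda>j. j < i"]) (use i S in auto)
  qed auto
  with assms show ?thesis by blast
qed

lemma is_path_length_le_card:
  fixes f :: "'a \<Rightarrow> 'b::linorder"
  assumes path: "is_path T S xs"
    and "finite A" and "f ` T \<subseteq> A"
    and increasing: "\<And>u v. (u, v) \<in> S \<Longrightarrow> u \<in> T \<Longrightarrow> v \<in> T \<Longrightarrow> f u < f v"
  shows "length xs \<le> card A"
proof -
  have "f (xs ! i) < f (xs ! Suc i)" if "Suc i < length xs" for i
    using path that by (intro increasing) (auto simp: is_path_def)
  then have "sorted_wrt (<) (map f xs)"
    by (simp add: sorted_wrt_iff_nth_Suc_transp[OF transp_on_less])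
  then have "distinct (map f xs)"
    by (simp add: strict_sorted_iff)
  then have "length xs = card (set (map f xs))"
    by (metis distinct_card length_map)
  also have "\<dots> \<le> card A"
    using path assms(2,3) by (intro card_mono) (auto simp: is_path_def)
  finally show ?thesis .
qed

lemma Lt1_le:
  assumes "\<And>xs. is_path T S xs \<Longrightarrow> length xs \<le> n"
  shows "Lt1 T S \<le> n"
proof (cases "\<exists>xs. is_path T S xs")
  case True
  then show ?thesis
    unfolding Lt1_def by (intro cSup_least) (auto intro: assms)
next
  case False
  then show ?thesis
    unfolding Lt1_def by simp
qed

lemma Lt1_level_schedule_le:
  assumes disjoint: "\<forall>i\<in>{1..k}. \<forall>j\<in>{1..k}. i \<noteq> j \<longrightarrow> B i \<inter> B j = {}"
    and cover: "(\<Union>i\<in>{1..k}. B i) = T"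
  shows "Lt1 T (level_schedule C k B) \<le> k"
proof -
  have "\<forall>x\<in>T. \<exists>i. i \<in> {1..k} \<and> x \<in> B i"
    using cover by blast
  then obtain layer where layer: "\<And>x. x \<in> T \<Longrightarrow> layer x \<in> {1..k} \<and> x \<in> B (layer x)"
    by metis
  have layer_eq: "layer x = i" if "i \<in> {1..k}" "x \<in> B i" for x i
    using that layer[of x] disjoint cover by blast
  show ?thesis
  proof (rule Lt1_le)
    fix xs assume "is_path T (level_schedule C k B) xs"
    then have "length xs \<le> card {1..k}"
    proof (rule is_path_length_le_card)
      fix u v assume "(u, v) \<in> level_schedule C k B"
      then obtain j i where "1 \<le> j" "j < i" "i \<le> k" "u \<in> B j" "v \<in> B i"
        by (blast dest: level_schedule_edge)
      then have "layer u = j" and "layer v = i"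
        by (auto intro: layer_eq)
      with \<open>j < i\<close> show "layer u < layer v"
        by simp
    qed (use layer in auto)
    then show "length xs \<le> k"
      by simp
  qed
qed

lemma legal_partition_permute:
  assumes "legal_partition T C k B" and "\<sigma> permutes {1..k}"
  shows "legal_partition T C k (\<lambda>i. B (\<sigma> i))"
proof -
  have image: "\<sigma> ` {1..k} = {1..k}" and "inj \<sigma>"
    using assms(2) by (rule permutes_image, rule permutes_inj)
  then have "\<sigma> i \<in> {1..k}" "\<sigma> i \<noteq> \<sigma> j" if "i \<in> {1..k}" "i \<noteq> j" for i j
    using that by (auto simp: inj_eq)
  moreover have "(\<Union>i\<in>{1..k}. B (\<sigma> i)) = (\<Union>i\<in>{1..k}. B i)"
    by (metis image image_image)
  ultimately show ?thesis
    using assms(1) unfolding legal_partition_def by (metis (no_types, lifting))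
qed

theorem claim1:
  fixes T :: "'a set" and C :: "'a \<Rightarrow> 'a \<Rightarrow> bool"
    and k :: nat and B :: "nat \<Rightarrow> 'a set" and \<sigma> :: "nat \<Rightarrow> nat"
  assumes "block T C"
    and "legal_partition T C k B"
    and "\<sigma> permutes {1..k}"
  shows "Lt1 T (level_schedule C k B) \<le> k
       \<and> Lt1 T (level_schedule C k (\<lambda>i. B (\<sigma> i))) \<le> k"
proof -
  have "legal_partition T C k (\<lambda>i. B (\<sigma> i))"
    using assms(2,3) by (rule legal_partition_permute)
  with assms(2) show ?thesis
    unfolding legal_partition_def by (blast intro: Lt1_level_schedule_le)
qed

end
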